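(* Let $E = [c_1,d_1]\cup\cdots\cup[c_k,d_k]$ with $0 = c_1 \le d_1 < c_2 \le d_2 < \cdots < c_k \le d_k = 1$, and let $\operatorname{meas}(E) = \sum_{i=1}^k (d_i - c_i)$. Then \[ \beta(E) := \max_{q} \min\left(\mathbb{E}_{i\sim q}[U_0(i)],\ \mathbb{E}_{i\sim q}[U_1(i)]\right) \ge \frac{1}{2 - \operatorname{meas}(E)}, \] where the maximum is over probability distributions $q$ on $\{1,\dots,k\}$.
   Context: For $i \in [k]$, $U_0(i) = \prod_{j=1}^{i-1} \frac{1 - c_{j+1}}{1 - d_j}$ and $U_1(i) = \prod_{l=i}^{k-1} \frac{d_l}{c_{l+1}}$ (empty products equal $1$). *)

theory Defs
  imports Complex_Main
begin

text \<open>Intervals [c_i,d_i], i = 1..k, encoded by c d :: nat => real (indices 1..k).\<close>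

definition U0 :: "(nat \<Rightarrow> real) \<Rightarrow> (nat \<Rightarrow> real) \<Rightarrow> nat \<Rightarrow> real" where
  "U0 c d i = (\<Prod>j = 1..i - 1. (1 - c (j + 1)) / (1 - d j))"

definition U1 :: "(nat \<Rightarrow> real) \<Rightarrow> (nat \<Rightarrow> real) \<Rightarrow> nat \<Rightarrow> nat \<Rightarrow> real" where
  "U1 c d k i = (\<Prod>l = i..k - 1. d l / c (l + 1))"

definition meas :: "(nat \<Rightarrow> real) \<Rightarrow> (nat \<Rightarrow> real) \<Rightarrow> nat \<Rightarrow> real" where
  "meas c d k = (\<Sum>i = 1..k. d i - c i)"

definition prob_dists :: "nat \<Rightarrow> (nat \<Rightarrow> real) set" where
  "prob_dists k = {q. (\<forall>i\<in>{1..k}. 0 \<le> q i) \<and> (\<Sum>i = 1..k. q i) = 1}"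

definition beta :: "(nat \<Rightarrow> real) \<Rightarrow> (nat \<Rightarrow> real) \<Rightarrow> nat \<Rightarrow> real" where
  "beta c d k = Sup ((\<lambda>q. min (\<Sum>i = 1..k. q i * U0 c d i) (\<Sum>i = 1..k. q i * U1 c d k i))
                      ` prob_dists k)"

end

theory Submission
  imports Defs
begin

text \<open>With the conventions d_0 = 0 and c_(k+1) = 1, give interval i the weight
  Q_i = c_(i+1) - d_(i-1), the length of the interval together with its two adjacent gaps.
  These weights are nonnegative, they add up to 2 - meas(E) because every gap is counted
  twice, and both Q_i U_0(i) and Q_i U_1(i) telescope, with total 1. Normalising Q gives a
  distribution on which both expectations equal 1 / (2 - meas(E)).\<close>

definition c_ext :: "(nat \<Rightarrow> real) \<Rightarrow> nat \<Rightarrow> nat \<Rightarrow> real" where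
  "c_ext c k j = (if j = k + 1 then 1 else c j)"

definition d_ext :: "(nat \<Rightarrow> real) \<Rightarrow> nat \<Rightarrow> real" where
  "d_ext d j = (if j = 0 then 0 else d j)"

definition gap_weight :: "(nat \<Rightarrow> real) \<Rightarrow> (nat \<Rightarrow> real) \<Rightarrow> nat \<Rightarrow> nat \<Rightarrow> real" where
  "gap_weight c d k i = c_ext c k (i + 1) - d_ext d (i - 1)"

lemma U0_Suc:
  assumes "1 \<le> n"
  shows "U0 c d (Suc n) = U0 c d n * ((1 - c (n + 1)) / (1 - d n))"
  using assms unfolding U0_def by (cases n) simp_all

lemma U1_Suc:
  assumes "m < k"
  shows "U1 c d k m = d m / c (m + 1) * U1 c d k (m + 1)"
  using assms unfolding U1_def by (simp add: prod.atLeast_Suc_atMost)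

lemma U1_last:
  assumes "1 \<le> k"
  shows "U1 c d k k = 1" and "U1 c d k (k + 1) = 1"
  using assms by (simp_all add: U1_def)

lemma sum_gap_weight:
  assumes "1 \<le> k" "c 1 = 0" "d k = 1"
  shows "(\<Sum>i = 1..k. gap_weight c d k i) = 2 - meas c d k"
proof -
  have "(\<Sum>i = 1..n. gap_weight c d k i) = c_ext c k (n + 1) + d_ext d n - (\<Sum>i = 1..n. d i - c i)"
    if "n \<le> k" for n
    using that
  proof (induction n)
    case 0
    show ?case using assms by (simp add: c_ext_def d_ext_def)
  next
    case (Suc n)
    then show ?case by (simp add: gap_weight_def c_ext_def d_ext_def)
  qed
  from this[of k] show ?thesis
    using assms by (simp add: c_ext_def d_ext_def meas_def)
qed

lemma left_endpoints_mono:
  fixes c d :: "nat \<Rightarrow> real" and i j k :: nat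
  assumes "\<And>i. 1 \<le> i \<Longrightarrow> i \<le> k \<Longrightarrow> c i \<le> d i"
    and "\<And>i. 1 \<le> i \<Longrightarrow> i < k \<Longrightarrow> d i < c (i + 1)"
    and "1 \<le> i" "i \<le> j" "j \<le> k"
  shows "c i \<le> c j"
  using \<open>i \<le> j\<close> \<open>j \<le> k\<close>
proof (induction j rule: dec_induct)
  case (step n)
  have "c n \<le> d n" using assms(1)[of n] step \<open>1 \<le> i\<close> by simp
  also have "\<dots> < c (n + 1)" using assms(2)[of n] step \<open>1 \<le> i\<close> by simp
  finally show ?case using step by simp
qed simp

lemma gap_weight_nonneg:
  assumes "c 1 = 0" "d k = 1"
    and cd: "\<And>i. 1 \<le> i \<Longrightarrow> i \<le> k \<Longrightarrow> c i \<le> d i"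
    and dc: "\<And>i. 1 \<le> i \<Longrightarrow> i < k \<Longrightarrow> d i < c (i + 1)"
    and "1 \<le> i" "i \<le> k"
  shows "0 \<le> gap_weight c d k i"
proof -
  have "d_ext d (i - 1) \<le> c i"
  proof (cases "i = 1")
    case False
    then have "1 \<le> i - 1" "i - 1 < k" using assms by simp_all
    then show ?thesis using dc[of "i - 1"] \<open>1 \<le> i\<close> False by (simp add: d_ext_def)
  qed (use assms(1) in \<open>simp add: d_ext_def\<close>)
  moreover have "d i \<le> c_ext c k (i + 1)"
  proof (cases "i = k")
    case False
    then have "i < k" using assms by simp
    then show ?thesis using dc[of i] \<open>1 \<le> i\<close> by (simp add: c_ext_def)
  qed (use assms(2) in \<open>simp add: c_ext_def\<close>)
  ultimately show ?thesis using cd[OF \<open>1 \<le> i\<close> \<open>i \<le> k\<close>] by (simp add: gap_weight_def)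
qed

lemma U0_telescope:
  assumes "n \<le> k" "d k = 1" "\<And>i. 1 \<le> i \<Longrightarrow> i < k \<Longrightarrow> d i \<noteq> 1"
  shows "(\<Sum>i = 1..n. gap_weight c d k i * U0 c d i) = 1 - U0 c d (n + 1) * (1 - d_ext d n)"
  using \<open>n \<le> k\<close>
proof (induction n)
  case 0
  then show ?case by (simp add: U0_def d_ext_def)
next
  case (Suc n)
  have step: "U0 c d (n + 2) * (1 - d_ext d (n + 1)) = U0 c d (n + 1) * (1 - c_ext c k (n + 2))"
  proof (cases "n + 1 = k")
    case True
    then show ?thesis using assms by (simp add: d_ext_def c_ext_def)
  next
    case False
    with Suc assms(3)[of "n + 1"] show ?thesis
      using U0_Suc[of "n + 1" c d] by (simp add: d_ext_def c_ext_def)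
  qed
  have "(\<Sum>i = 1..Suc n. gap_weight c d k i * U0 c d i)
      = 1 - U0 c d (n + 1) * (1 - d_ext d n) + gap_weight c d k (n + 1) * U0 c d (n + 1)"
    using Suc by simp
  also have "\<dots> = 1 - U0 c d (n + 1) * (1 - c_ext c k (n + 2))"
    by (simp add: gap_weight_def algebra_simps)
  finally show ?case using step by simp
qed

lemma U1_telescope:
  assumes "1 \<le> m" "m \<le> k + 1" "1 \<le> k" "d k = 1"
    and "\<And>i. 1 \<le> i \<Longrightarrow> i < k \<Longrightarrow> c (i + 1) \<noteq> 0"
  shows "(\<Sum>i = m..k. gap_weight c d k i * U1 c d k i) = 1 - U1 c d k m * d_ext d (m - 1)"
  using \<open>m \<le> k + 1\<close> \<open>1 \<le> m\<close>
proof (induction m rule: inc_induct)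
  case base
  then show ?case using assms U1_last by (simp add: d_ext_def)
next
  case (step m)
  have step_eq: "U1 c d k (m + 1) * d_ext d m = U1 c d k m * c_ext c k (m + 1)"
  proof (cases "m = k")
    case True
    then show ?thesis using assms U1_last by (simp add: d_ext_def c_ext_def)
  next
    case False
    with step assms(5)[of m] show ?thesis
      using U1_Suc[of m k c d] by (simp add: d_ext_def c_ext_def)
  qed
  have "(\<Sum>i = m..k. gap_weight c d k i * U1 c d k i)
      = gap_weight c d k m * U1 c d k m + (\<Sum>i = Suc m..k. gap_weight c d k i * U1 c d k i)"
    using step by (simp add: sum.atLeast_Suc_atMost)
  also have "\<dots> = 1 - U1 c d k m * d_ext d (m - 1)"
    using step step_eq by (simp add: gap_weight_def algebra_simps)
  finally show ?case .
qed

lemma beta_upper: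
  assumes "q \<in> prob_dists k"
  shows "min (\<Sum>i = 1..k. q i * U0 c d i) (\<Sum>i = 1..k. q i * U1 c d k i) \<le> beta c d k"
proof -
  let ?f = "\<lambda>q. min (\<Sum>i = 1..k. q i * U0 c d i) (\<Sum>i = 1..k. q i * U1 c d k i)"
  have "?f p \<le> (\<Sum>i = 1..k. \<bar>U0 c d i\<bar>)" if "p \<in> prob_dists k" for p
  proof -
    have p_nonneg: "0 \<le> p i" and p_le1: "p i \<le> 1" if "i \<in> {1..k}" for i
      using \<open>p \<in> prob_dists k\<close> that member_le_sum[of i "{1..k}" p]
      by (auto simp: prob_dists_def)
    have "?f p \<le> (\<Sum>i = 1..k. p i * U0 c d i)" by simp
    also have "\<dots> \<le> (\<Sum>i = 1..k. \<bar>U0 c d i\<bar>)"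
    proof (rule sum_mono)
      fix i assume "i \<in> {1..k}"
      then have "p i * U0 c d i \<le> p i * \<bar>U0 c d i\<bar>"
        using p_nonneg by (simp add: mult_left_mono)
      also have "\<dots> \<le> \<bar>U0 c d i\<bar>"
        using p_nonneg p_le1 \<open>i \<in> {1..k}\<close> by (simp add: mult_left_le_one_le)
      finally show "p i * U0 c d i \<le> \<bar>U0 c d i\<bar>" .
    qed
    finally show ?thesis .
  qed
  then have "bdd_above (?f ` prob_dists k)" by (intro bdd_aboveI2)
  then show ?thesis unfolding beta_def by (rule cSup_upper[OF imageI[OF assms]])
qed

lemma beta_ge_by_weights:
  assumes "\<And>i. i \<in> {1..k} \<Longrightarrow> 0 \<le> w i"
    and "(\<Sum>i = 1..k. w i * U0 c d i) = 1" "(\<Sum>i = 1..k. w i * U1 c d k i) = 1"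
  shows "1 / (\<Sum>i = 1..k. w i) \<le> beta c d k"
proof -
  define S where "S = (\<Sum>i = 1..k. w i)"
  have "S \<noteq> 0"
  proof
    assume "S = 0"
    then have "\<forall>i\<in>{1..k}. w i = 0" using assms(1) sum_nonneg_eq_0_iff[of "{1..k}" w] by (auto simp: S_def)
    then show False using assms(2) by simp
  qed
  moreover have "0 \<le> S" unfolding S_def using assms(1) by (rule sum_nonneg)
  ultimately have "0 < S" by simp
  define q where "q i = w i / S" for i
  have "q \<in> prob_dists k"
    using assms(1) \<open>0 < S\<close> by (auto simp: prob_dists_def q_def S_def sum_divide_distrib[symmetric])
  moreover have "(\<Sum>i = 1..k. q i * U0 c d i) = 1 / S" "(\<Sum>i = 1..k. q i * U1 c d k i) = 1 / S"
    using assms(2,3) by (simp_all add: q_def sum_divide_distrib[symmetric])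
  ultimately show ?thesis using beta_upper[of q k c d] by (simp add: S_def)
qed

theorem claim3p5:
  fixes c d :: "nat \<Rightarrow> real" and k :: nat
  assumes "k \<ge> 1"
    and "c 1 = 0" and "d k = 1"
    and "\<And>i. 1 \<le> i \<Longrightarrow> i \<le> k \<Longrightarrow> c i \<le> d i"
    and "\<And>i. 1 \<le> i \<Longrightarrow> i < k \<Longrightarrow> d i < c (i + 1)"
  shows "beta c d k \<ge> 1 / (2 - meas c d k)"
proof -
  note cd = assms(4) and dc = assms(5)
  have c_mono: "c i \<le> c j" if "1 \<le> i" "i \<le> j" "j \<le> k" for i j
    using left_endpoints_mono[where c = c and d = d and k = k, OF cd dc that] .
  have "d i \<noteq> 1" if "1 \<le> i" "i < k" for i
    using dc[of i] cd[of k] c_mono[of "i + 1" k] that assms(3) by simp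
  then have "(\<Sum>i = 1..k. gap_weight c d k i * U0 c d i) = 1"
    using U0_telescope[of k k d c] assms(1,3) by (simp add: d_ext_def)
  moreover have "c (i + 1) \<noteq> 0" if "1 \<le> i" "i < k" for i
    using dc[of i] cd[of i] c_mono[of 1 i] that assms(2) by simp
  then have "(\<Sum>i = 1..k. gap_weight c d k i * U1 c d k i) = 1"
    using U1_telescope[of 1 k d c] assms(1,3) by (simp add: d_ext_def)
  moreover have "0 \<le> gap_weight c d k i" if "i \<in> {1..k}" for i
    using gap_weight_nonneg[OF assms(2,3) cd dc] that by simp
  ultimately show ?thesis
    using beta_ge_by_weights[of k "gap_weight c d k" c d] sum_gap_weight[of k c d] assms(1-3)
    by simp
qed

end
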